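(* Let $\mathbb{K}$ be a field and $\Delta$ a $d$-dimensional simplicial complex on vertex set $[n]$ such that $\tilde H_d(\Delta;\mathbb{K})\ne0$. Set $R=\mathbb{K}[x_1,\dots,x_n]$, $L=x_1+\dots+x_n$ and $J=I_\Delta+(x_1^{d+2},\dots,x_n^{d+2})$. Then the multiplication map $$\times L:\Big(\frac{R}{J}\Big)_{\binom{d+2}{2}-1}\to\Big(\frac{R}{J}\Big)_{\binom{d+2}{2}}$$ is not surjective.
   Context: $I_\Delta=(\prod_{i\in\tau}x_i:\tau\subseteq[n],\tau\notin\Delta)$ is the Stanley–Reisner ideal of $\Delta$. *)

theory Defs
  imports Main "HOL-Library.Poly_Mapping"
begin

type_synonym 'k mpoly = "(nat \<Rightarrow>\<^sub>0 nat) \<Rightarrow>\<^sub>0 'k"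

definition var :: "nat \<Rightarrow> 'k::comm_ring_1 mpoly" where
  "var i = Poly_Mapping.single (Poly_Mapping.single i 1) 1"

definition mdeg :: "(nat \<Rightarrow>\<^sub>0 nat) \<Rightarrow> nat" where
  "mdeg a = (\<Sum>i\<in>Poly_Mapping.keys a. Poly_Mapping.lookup a i)"

definition polyring :: "nat \<Rightarrow> 'k::comm_ring_1 mpoly set" where
  "polyring n = {f. \<forall>a\<in>Poly_Mapping.keys f. Poly_Mapping.keys a \<subseteq> {1..n}}"

definition homogeneous :: "nat \<Rightarrow> 'k::comm_ring_1 mpoly \<Rightarrow> bool" where
  "homogeneous m f \<longleftrightarrow> (\<forall>a\<in>Poly_Mapping.keys f. mdeg a = m)"

definition ideal_gen :: "nat \<Rightarrow> 'k::comm_ring_1 mpoly set \<Rightarrow> 'k mpoly set" where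
  "ideal_gen n S = {(\<Sum>i<k. r i * s i) | (k::nat) r s. \<forall>i<k. r i \<in> polyring n \<and> s i \<in> S}"

definition simplicial_complex :: "nat \<Rightarrow> nat set set \<Rightarrow> bool" where
  "simplicial_complex n \<Delta> \<longleftrightarrow> \<Delta> \<noteq> {} \<and> (\<forall>\<sigma>\<in>\<Delta>. \<sigma> \<subseteq> {1..n}) \<and>
     (\<forall>\<sigma>\<in>\<Delta>. \<forall>\<tau>. \<tau> \<subseteq> \<sigma> \<longrightarrow> \<tau> \<in> \<Delta>)"

definition complex_dim :: "nat set set \<Rightarrow> nat \<Rightarrow> bool" where
  "complex_dim \<Delta> d \<longleftrightarrow> (\<exists>\<sigma>\<in>\<Delta>. card \<sigma> = d + 1) \<and> (\<forall>\<sigma>\<in>\<Delta>. card \<sigma> \<le> d + 1)"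

definition SR_ideal :: "nat \<Rightarrow> nat set set \<Rightarrow> 'k::comm_ring_1 mpoly set" where
  "SR_ideal n \<Delta> = ideal_gen n {(\<Prod>i\<in>\<tau>. var i) | \<tau>. \<tau> \<subseteq> {1..n} \<and> \<tau> \<notin> \<Delta>}"

text \<open>A k-chain: a K-valued function on faces with k+1 vertices (vertices ordered increasingly).
  For k = 0 the boundary goes to the (-1)-chains supported on the empty face,
  so the resulting homology is the reduced homology.\<close>
definition is_chain :: "nat set set \<Rightarrow> nat \<Rightarrow> (nat set \<Rightarrow> 'k::field) \<Rightarrow> bool" where
  "is_chain \<Delta> k c \<longleftrightarrow> (\<forall>\<sigma>. c \<sigma> \<noteq> 0 \<longrightarrow> \<sigma> \<in> \<Delta> \<and> card \<sigma> = k + 1)"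

definition boundary :: "nat \<Rightarrow> nat set set \<Rightarrow> (nat set \<Rightarrow> 'k::field) \<Rightarrow> nat set \<Rightarrow> 'k" where
  "boundary n \<Delta> c \<tau> = (\<Sum>v\<in>{1..n} - \<tau>.
      if insert v \<tau> \<in> \<Delta> then (-1) ^ card {u\<in>\<tau>. u < v} * c (insert v \<tau>) else 0)"

definition reduced_homology_nonzero :: "'k::field itself \<Rightarrow> nat \<Rightarrow> nat set set \<Rightarrow> nat \<Rightarrow> bool" where
  "reduced_homology_nonzero _ n \<Delta> k \<longleftrightarrow>
     (\<exists>z :: nat set \<Rightarrow> 'k. is_chain \<Delta> k z \<and> (\<forall>\<tau>. boundary n \<Delta> z \<tau> = 0) \<and>
        \<not> (\<exists>b :: nat set \<Rightarrow> 'k. is_chain \<Delta> (k + 1) b \<and> (\<forall>\<tau>. z \<tau> = boundary n \<Delta> b \<tau>)))"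

end

theory Submission
  imports Defs "HOL-Combinatorics.Transposition"
begin

(* Since the reduced homology in degree d is nonzero, \<Delta> carries a nonzero d-cycle z.
   A monomial x^a whose exponents are pairwise distinct and at most d + 1 orders its support
   by exponent; give it the weight z (supp a) times the sign of that order, and give every
   other monomial weight 0. The induced linear functional on R kills J, because each monomial
   of J has non-face support or an exponent d + 2. It also kills L R: in the sum of the
   weights of x_i x^b over all i, the terms with x_i dividing x^b cancel in pairs (raising
   either of two equal exponents gives orders differing by a transposition), and the other
   terms add up to plus or minus the boundary of z at supp b, which is 0. Finally, a monomial
   with exponents 1, ..., d + 1 on a face \<sigma> with z \<sigma> \<noteq> 0 has degree binom(d + 2, 2) and
   nonzero weight, so it is not in J + L R. *)

(* Keeps the exponent 1 in single i 1 from being rewritten to Suc 0. *)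
declare One_nat_def [simp del]

definition pairing :: "('a \<Rightarrow> 'k::comm_ring_1) \<Rightarrow> ('a \<Rightarrow>\<^sub>0 'k) \<Rightarrow> 'k" where
  "pairing w h = (\<Sum>a\<in>Poly_Mapping.keys h. Poly_Mapping.lookup h a * w a)"

lemma pairing_add: "pairing w (f + g) = pairing w f + pairing w g"
  unfolding pairing_def by (rule setsum_keys_plus_distrib) (simp_all add: distrib_right)

lemma pairing_uminus: "pairing w (- f) = - pairing w f"
  unfolding pairing_def by (simp add: sum_negf)

lemma pairing_diff: "pairing w (f - g) = pairing w f - pairing w g"
  using pairing_add[of w f "- g"] by (simp add: pairing_uminus)

lemma pairing_zero [simp]: "pairing w 0 = 0"
  unfolding pairing_def by simp

lemma pairing_sum: "pairing w (\<Sum>x\<in>A. h x) = (\<Sum>x\<in>A. pairing w (h x))"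
  by (induction A rule: infinite_finite_induct) (simp_all add: pairing_add)

lemma pairing_single [simp]: "pairing w (Poly_Mapping.single a c) = c * w a"
  unfolding pairing_def by simp

lemma pairing_eq_0: "(\<And>a. a \<in> Poly_Mapping.keys h \<Longrightarrow> w a = 0) \<Longrightarrow> pairing w h = 0"
  unfolding pairing_def by simp

lemma poly_mapping_sum_single:
  "(\<Sum>a\<in>Poly_Mapping.keys h. Poly_Mapping.single a (Poly_Mapping.lookup h a)) = h"
  by (rule poly_mapping_eqI) (simp add: lookup_sum lookup_single when_def in_keys_iff)

lemma keys_add_nat:
  "Poly_Mapping.keys (a + b) = Poly_Mapping.keys a \<union> Poly_Mapping.keys (b :: 'a \<Rightarrow>\<^sub>0 nat)"
  by (auto simp: in_keys_iff lookup_add)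

lemma keys_ideal_gen_upward_closed:
  fixes S :: "'k::comm_ring_1 mpoly set"
  assumes upward: "\<And>a b. P b \<Longrightarrow> P (a + b)"
    and generators: "\<And>s a. s \<in> S \<Longrightarrow> a \<in> Poly_Mapping.keys s \<Longrightarrow> P a"
    and "h \<in> ideal_gen n S" and "a \<in> Poly_Mapping.keys h"
  shows "P a"
proof -
  obtain k :: nat and r s
    where h: "h = (\<Sum>i<k. r i * s i)" and s: "\<forall>i<k. r i \<in> polyring n \<and> s i \<in> S"
    using assms(3) unfolding ideal_gen_def by blast
  obtain i where "i < k" "a \<in> Poly_Mapping.keys (r i * s i)"
    using keys_sum[of "\<lambda>i. r i * s i" "{..<k}"] assms(4) h by auto
  then obtain a' b where "a = a' + b" "b \<in> Poly_Mapping.keys (s i)"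
    using keys_mult[of "r i" "s i"] by blast
  then show "P a"
    using upward generators s \<open>i < k\<close> by blast
qed

lemma prod_var_eq_single:
  "finite \<tau> \<Longrightarrow> (\<Prod>i\<in>\<tau>. var i) =
     (Poly_Mapping.single (\<Sum>i\<in>\<tau>. Poly_Mapping.single i 1) 1 :: 'k::comm_ring_1 mpoly)"
  by (induction \<tau> rule: finite_induct) (auto simp: var_def mult_single)

lemma keys_sum_single_one:
  "finite \<tau> \<Longrightarrow> Poly_Mapping.keys (\<Sum>i\<in>\<tau>. Poly_Mapping.single i (1::nat)) = \<tau>"
  by (auto simp: in_keys_iff lookup_sum lookup_single when_def split: if_splits)

lemma var_power: "(var i ^ k :: 'k::comm_ring_1 mpoly) = Poly_Mapping.single (Poly_Mapping.single i k) 1"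
  by (induction k) (simp_all add: var_def mult_single single_add[symmetric] plus_1_eq_Suc)

definition standard_monomial :: "nat set set \<Rightarrow> nat \<Rightarrow> (nat \<Rightarrow>\<^sub>0 nat) \<Rightarrow> bool" where
  "standard_monomial \<Delta> d a \<longleftrightarrow>
     Poly_Mapping.keys a \<in> \<Delta> \<and> (\<forall>i. Poly_Mapping.lookup a i \<le> d + 1)"

lemma keys_ideal_not_standard:
  assumes "simplicial_complex n \<Delta>"
    and "h \<in> ideal_gen n (SR_ideal n \<Delta> \<union> {var i ^ (d + 2) | i. i \<in> {1..n}})"
    and "a \<in> Poly_Mapping.keys (h :: 'k::comm_ring_1 mpoly)"
  shows "\<not> standard_monomial \<Delta> d a"
proof -
  let ?P = "\<lambda>a. \<not> standard_monomial \<Delta> d a"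
  have upward: "?P (a + b)" if "?P b" for a b
  proof -
    have "Poly_Mapping.keys (a + b) \<in> \<Delta> \<Longrightarrow> Poly_Mapping.keys b \<in> \<Delta>"
      using assms(1) unfolding simplicial_complex_def keys_add_nat by blast
    then show ?thesis
      using that unfolding standard_monomial_def by (auto simp: lookup_add intro: le_trans[OF le_add2])
  qed
  have non_face: "?P a" if "s \<in> SR_ideal n \<Delta>" "a \<in> Poly_Mapping.keys s" for s :: "'k mpoly" and a
  proof (rule keys_ideal_gen_upward_closed[of ?P, OF upward _ that[unfolded SR_ideal_def]])
    fix t :: "'k mpoly" and c
    assume "t \<in> {\<Prod>i\<in>\<tau>. var i |\<tau>. \<tau> \<subseteq> {1..n} \<and> \<tau> \<notin> \<Delta>}" "c \<in> Poly_Mapping.keys t"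
    then obtain \<tau> where "c = (\<Sum>i\<in>\<tau>. Poly_Mapping.single i 1)" "\<tau> \<subseteq> {1..n}" "\<tau> \<notin> \<Delta>"
      by (auto simp: prod_var_eq_single finite_subset)
    moreover have "finite \<tau>"
      using \<open>\<tau> \<subseteq> {1..n}\<close> finite_subset by blast
    ultimately have "Poly_Mapping.keys c = \<tau>"
      using keys_sum_single_one by blast
    with \<open>\<tau> \<notin> \<Delta>\<close> show "?P c"
      unfolding standard_monomial_def by simp
  qed
  have power: "?P a" if "a \<in> Poly_Mapping.keys (var i ^ (d + 2) :: 'k mpoly)" for i a
    using that unfolding var_power
    by (auto simp: standard_monomial_def intro!: exI[of _ i] split: if_splits)
  show ?thesis
  proof (rule keys_ideal_gen_upward_closed[of ?P, OF upward _ assms(2,3)])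
    fix s :: "'k mpoly" and a
    assume "s \<in> SR_ideal n \<Delta> \<union> {var i ^ (d + 2) | i. i \<in> {1..n}}" "a \<in> Poly_Mapping.keys s"
    then show "?P a"
      using non_face power by blast
  qed
qed

definition inversions :: "nat set \<Rightarrow> (nat \<Rightarrow> nat) \<Rightarrow> (nat \<times> nat) set" where
  "inversions K f = {(u, v). u \<in> K \<and> v \<in> K \<and> u < v \<and> f v < f u}"

lemma finite_inversions: "finite K \<Longrightarrow> finite (inversions K f)"
  by (rule finite_subset[of _ "K \<times> K"]) (auto simp: inversions_def)

lemma neg_one_power_card_toggle:
  assumes "finite A" "finite B" "A - {x} = B - {x}" "x \<in> A \<longleftrightarrow> x \<notin> B"
  shows "(-1::'a::ring_1) ^ card B = - ((-1) ^ card A)"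
proof (cases "x \<in> A")
  case True
  then have "A = insert x B" "x \<notin> B"
    using assms(3,4) by blast+
  then show ?thesis
    using assms(2) by simp
next
  case False
  then have "B = insert x A" "x \<notin> A"
    using assms(3,4) by blast+
  then show ?thesis
    using assms(1) by simp
qed

lemma inversions_swap_adjacent_values:
  assumes "finite K" "inj_on f K" "i \<in> K" "j \<in> K" "f i = Suc (f j)"
  shows "(-1::'a::ring_1) ^ card (inversions K (f \<circ> transpose i j)) =
    - ((-1) ^ card (inversions K f))"
proof (rule neg_one_power_card_toggle[OF finite_inversions finite_inversions])
  let ?g = "f \<circ> transpose i j"
  define p q where "p = min i j" and "q = max i j"
  have "i \<noteq> j"
    using assms(5) by auto
  have other: "f x \<noteq> f i \<and> f x \<noteq> f j" if "x \<in> K" "x \<noteq> i" "x \<noteq> j" for x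
    using assms(2-4) that by (metis inj_onD)
  \<comment> \<open>no value of f lies strictly between f j and f i\<close>
  have same_order: "?g v < ?g u \<longleftrightarrow> f v < f u"
    if "u \<in> K" "v \<in> K" "u < v" "(u, v) \<noteq> (p, q)" for u v
    using that other[of u] other[of v] assms(5) \<open>i \<noteq> j\<close>
    unfolding p_def q_def by (auto simp: transpose_def min_def max_def split: if_splits)
  show "inversions K f - {(p, q)} = inversions K ?g - {(p, q)}"
    using same_order unfolding inversions_def by auto
  show "(p, q) \<in> inversions K f \<longleftrightarrow> (p, q) \<notin> inversions K ?g"
    using assms(3-5) \<open>i \<noteq> j\<close> unfolding inversions_def p_def q_def by (auto simp: min_def max_def)
qed (use assms(1) in auto)

lemma card_inversions_insert_below:
  assumes "finite K" "i \<notin> K" "\<forall>u\<in>K. c < f u"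
  shows "card (inversions (insert i K) (f(i := c))) = card (inversions K f) + card {u \<in> K. u < i}"
proof -
  have "inversions (insert i K) (f(i := c)) = inversions K f \<union> (\<lambda>u. (u, i)) ` {u \<in> K. u < i}"
    using assms(2,3) unfolding inversions_def by auto
  moreover have "inversions K f \<inter> (\<lambda>u. (u, i)) ` {u \<in> K. u < i} = {}"
    using assms(2) unfolding inversions_def by auto
  ultimately show ?thesis
    using assms(1) by (simp add: card_Un_disjoint finite_inversions card_image inj_on_def)
qed

definition exponent_sign :: "(nat \<Rightarrow>\<^sub>0 nat) \<Rightarrow> 'k::comm_ring_1" where
  "exponent_sign a = (-1) ^ card (inversions (Poly_Mapping.keys a) (Poly_Mapping.lookup a))"

definition distinct_exponents :: "nat \<Rightarrow> (nat \<Rightarrow>\<^sub>0 nat) \<Rightarrow> bool" where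
  "distinct_exponents d a \<longleftrightarrow>
     inj_on (Poly_Mapping.lookup a) (Poly_Mapping.keys a) \<and> (\<forall>i. Poly_Mapping.lookup a i \<le> d + 1)"

definition cycle_weight :: "(nat set \<Rightarrow> 'k::field) \<Rightarrow> nat \<Rightarrow> (nat \<Rightarrow>\<^sub>0 nat) \<Rightarrow> 'k" where
  "cycle_weight z d a =
     (if distinct_exponents d a then z (Poly_Mapping.keys a) * exponent_sign a else 0)"

lemma lookup_single_one_add:
  fixes b :: "'a \<Rightarrow>\<^sub>0 nat"
  shows "Poly_Mapping.lookup (Poly_Mapping.single i 1 + b) x =
     (if x = i then Suc (Poly_Mapping.lookup b x) else Poly_Mapping.lookup b x)"
  by (simp add: lookup_add lookup_single)

lemma keys_single_one_add:
  fixes b :: "'a \<Rightarrow>\<^sub>0 nat"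
  shows "Poly_Mapping.keys (Poly_Mapping.single i 1 + b) = insert i (Poly_Mapping.keys b)"
  by (simp add: keys_add_nat)

lemma cycle_weight_not_standard:
  assumes "is_chain \<Delta> d z" "\<not> standard_monomial \<Delta> d a"
  shows "cycle_weight z d a = 0"
  using assms unfolding is_chain_def standard_monomial_def cycle_weight_def distinct_exponents_def
  by auto

lemma cycle_weight_swap:
  fixes z :: "nat set \<Rightarrow> 'k::field"
  assumes "i \<in> Poly_Mapping.keys b" "j \<in> Poly_Mapping.keys b" "i \<noteq> j"
    and "Poly_Mapping.lookup b i = Poly_Mapping.lookup b j"
  shows "cycle_weight z d (Poly_Mapping.single j 1 + b) =
    - cycle_weight z d (Poly_Mapping.single i 1 + b)"
proof -
  let ?a = "Poly_Mapping.single i 1 + b" and ?a' = "Poly_Mapping.single j 1 + b"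
  have swap: "Poly_Mapping.lookup ?a' = Poly_Mapping.lookup ?a \<circ> transpose i j"
    using assms unfolding fun_eq_iff lookup_single_one_add by (auto simp: transpose_def)
  have keys: "Poly_Mapping.keys ?a' = Poly_Mapping.keys b" "Poly_Mapping.keys ?a = Poly_Mapping.keys b"
    using assms(1,2) unfolding keys_single_one_add by auto
  have distinct: "distinct_exponents d ?a' \<longleftrightarrow> distinct_exponents d ?a"
    unfolding distinct_exponents_def keys swap
    using assms(1,2) by (auto simp: inj_on_swap_iff) (metis transpose_involutory)
  have "exponent_sign ?a' = - (exponent_sign ?a :: 'k)" if "distinct_exponents d ?a"
    unfolding exponent_sign_def keys swap
    using that assms by (intro inversions_swap_adjacent_values)
      (auto simp: distinct_exponents_def keys lookup_single_one_add)
  then show ?thesis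
    unfolding cycle_weight_def distinct keys by simp
qed

lemma cycle_weight_repeated_exponent:
  assumes "i \<in> Poly_Mapping.keys b" "j \<in> Poly_Mapping.keys b" "i \<noteq> j"
    and "Poly_Mapping.lookup b i = Poly_Mapping.lookup b j" "x \<noteq> i" "x \<noteq> j"
  shows "cycle_weight z d (Poly_Mapping.single x 1 + b) = 0"
proof -
  let ?a = "Poly_Mapping.single x 1 + b"
  have "Poly_Mapping.lookup ?a i = Poly_Mapping.lookup ?a j"
    and "i \<in> Poly_Mapping.keys ?a" "j \<in> Poly_Mapping.keys ?a"
    using assms unfolding keys_single_one_add lookup_single_one_add by simp_all
  then have "\<not> inj_on (Poly_Mapping.lookup ?a) (Poly_Mapping.keys ?a)"
    using \<open>i \<noteq> j\<close> by (meson inj_onD)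
  then show ?thesis
    unfolding cycle_weight_def distinct_exponents_def by simp
qed

lemma cycle_weight_partner:
  fixes z :: "nat set \<Rightarrow> 'k::field"
  assumes "is_chain \<Delta> d z" "i \<in> Poly_Mapping.keys b"
    and "cycle_weight z d (Poly_Mapping.single i 1 + b) \<noteq> 0"
  obtains j
  where "j \<in> Poly_Mapping.keys b" "j \<noteq> i" "Poly_Mapping.lookup b j = Poly_Mapping.lookup b i"
proof -
  let ?a = "Poly_Mapping.single i 1 + b"
  let ?K = "Poly_Mapping.keys b"
  have keys: "Poly_Mapping.keys ?a = ?K"
    using assms(2) unfolding keys_single_one_add by auto
  have inj: "inj_on (Poly_Mapping.lookup ?a) ?K" and bound: "\<forall>x. Poly_Mapping.lookup ?a x \<le> d + 1"
    and card: "card ?K = d + 1"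
    using assms(1,3) keys unfolding cycle_weight_def distinct_exponents_def is_chain_def
    by (auto split: if_splits)
  have "Poly_Mapping.lookup ?a ` ?K \<subseteq> {1..d + 1}"
    using bound keys by (auto simp: Suc_le_eq in_keys_iff lookup_add)
  then have onto: "Poly_Mapping.lookup ?a ` ?K = {1..d + 1}"
    using card card_image[OF inj] by (intro card_seteq) auto
  have "Poly_Mapping.lookup b i \<in> {1..d + 1}"
    using assms(2) bound[rule_format, of i]
    by (auto simp: in_keys_iff lookup_single_one_add)
  then obtain j where j: "j \<in> ?K" "Poly_Mapping.lookup ?a j = Poly_Mapping.lookup b i"
    unfolding onto[symmetric] by auto
  moreover have "j \<noteq> i"
    using j(2) unfolding lookup_single_one_add by auto
  ultimately show thesis
    using that[of j] unfolding lookup_single_one_add by simp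
qed

lemma sum_cycle_weight_keys:
  fixes z :: "nat set \<Rightarrow> 'k::field"
  assumes "is_chain \<Delta> d z"
  shows "(\<Sum>i\<in>Poly_Mapping.keys b. cycle_weight z d (Poly_Mapping.single i 1 + b)) = 0"
proof (cases "\<forall>i\<in>Poly_Mapping.keys b. cycle_weight z d (Poly_Mapping.single i 1 + b) = 0")
  case False
  then obtain i where i: "i \<in> Poly_Mapping.keys b" "cycle_weight z d (Poly_Mapping.single i 1 + b) \<noteq> 0"
    by blast
  then obtain j
    where j: "j \<in> Poly_Mapping.keys b" "j \<noteq> i" "Poly_Mapping.lookup b j = Poly_Mapping.lookup b i"
    using cycle_weight_partner[OF assms] by blast
  have "(\<Sum>x\<in>Poly_Mapping.keys b. cycle_weight z d (Poly_Mapping.single x 1 + b)) =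
      (\<Sum>x\<in>{i, j}. cycle_weight z d (Poly_Mapping.single x 1 + b))"
    using i(1) j cycle_weight_repeated_exponent[of i b j] by (intro sum.mono_neutral_right) auto
  also have "\<dots> = 0"
    using i(1) j cycle_weight_swap[of i b j z d] by simp
  finally show ?thesis .
qed simp

lemma lookup_single_one_add_new:
  fixes b :: "'a \<Rightarrow>\<^sub>0 nat"
  assumes "i \<notin> Poly_Mapping.keys b"
  shows "Poly_Mapping.lookup (Poly_Mapping.single i 1 + b) = (Poly_Mapping.lookup b)(i := 1)"
  using assms unfolding fun_eq_iff lookup_single_one_add by (simp add: in_keys_iff)

lemma distinct_exponents_single_one_add_new:
  assumes "i \<notin> Poly_Mapping.keys b"
  shows "distinct_exponents d (Poly_Mapping.single i 1 + b) \<longleftrightarrow>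
    distinct_exponents d b \<and> 1 \<notin> Poly_Mapping.lookup b ` Poly_Mapping.keys b"
proof -
  let ?f = "Poly_Mapping.lookup b" and ?K = "Poly_Mapping.keys b"
  have "inj_on (?f(i := 1)) ?K \<longleftrightarrow> inj_on ?f ?K"
    using assms by (intro inj_on_cong) auto
  moreover have "(?f(i := 1)) ` ?K = ?f ` ?K"
    using assms by (intro image_cong) auto
  moreover have "(\<forall>x. (?f(i := 1)) x \<le> d + 1) \<longleftrightarrow> (\<forall>x. ?f x \<le> d + 1)"
    using assms by (auto simp: in_keys_iff) (metis le0)
  ultimately show ?thesis
    unfolding distinct_exponents_def lookup_single_one_add_new[OF assms] keys_single_one_add
    using assms by auto
qed

lemma exponent_sign_single_one_add_new:
  assumes "i \<notin> Poly_Mapping.keys b" "1 \<notin> Poly_Mapping.lookup b ` Poly_Mapping.keys b"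
  shows "exponent_sign (Poly_Mapping.single i 1 + b) =
    exponent_sign b * (-1) ^ card {u \<in> Poly_Mapping.keys b. u < i}"
proof -
  have "\<forall>u\<in>Poly_Mapping.keys b. 1 < Poly_Mapping.lookup b u"
    using assms(2) by (metis image_eqI in_keys_iff less_one nat_neq_iff)
  then show ?thesis
    unfolding exponent_sign_def lookup_single_one_add_new[OF assms(1)] keys_single_one_add
    by (simp add: card_inversions_insert_below assms(1) power_add)
qed

lemma sum_cycle_weight_new_vars:
  fixes z :: "nat set \<Rightarrow> 'k::field"
  assumes chain: "is_chain \<Delta> d z" and cycle: "\<forall>\<tau>. boundary n \<Delta> z \<tau> = 0"
  shows "(\<Sum>i\<in>{1..n} - Poly_Mapping.keys b. cycle_weight z d (Poly_Mapping.single i 1 + b)) = 0"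
proof (cases "distinct_exponents d b \<and> 1 \<notin> Poly_Mapping.lookup b ` Poly_Mapping.keys b")
  case True
  let ?K = "Poly_Mapping.keys b"
  have "cycle_weight z d (Poly_Mapping.single i 1 + b) = exponent_sign b *
      (if insert i ?K \<in> \<Delta> then (-1) ^ card {u \<in> ?K. u < i} * z (insert i ?K) else 0)"
    if "i \<notin> ?K" for i
  proof -
    have "z (insert i ?K) = 0" if "insert i ?K \<notin> \<Delta>"
      using chain that unfolding is_chain_def by blast
    then show ?thesis
      using True \<open>i \<notin> ?K\<close>
      by (simp add: cycle_weight_def distinct_exponents_single_one_add_new keys_single_one_add
          exponent_sign_single_one_add_new)
  qed
  then have "(\<Sum>i\<in>{1..n} - ?K. cycle_weight z d (Poly_Mapping.single i 1 + b)) =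
      exponent_sign b * boundary n \<Delta> z ?K"
    unfolding boundary_def sum_distrib_left by (intro sum.cong) auto
  then show ?thesis
    using cycle by simp
next
  case False
  then show ?thesis
    by (auto intro!: sum.neutral simp: cycle_weight_def distinct_exponents_single_one_add_new)
qed

lemma sum_cycle_weight_single_one_add:
  fixes z :: "nat set \<Rightarrow> 'k::field"
  assumes "simplicial_complex n \<Delta>" "is_chain \<Delta> d z" "\<forall>\<tau>. boundary n \<Delta> z \<tau> = 0"
  shows "(\<Sum>i\<in>{1..n}. cycle_weight z d (Poly_Mapping.single i 1 + b)) = 0"
proof -
  let ?K = "Poly_Mapping.keys b" and ?w = "\<lambda>i. cycle_weight z d (Poly_Mapping.single i 1 + b)"
  have "sum ?w ({1..n} \<inter> ?K) = 0"
  proof (cases "?K \<subseteq> {1..n}")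
    case True
    then show ?thesis
      using sum_cycle_weight_keys[OF assms(2)] by (simp add: Int_absorb1)
  next
    case False
    then have "\<not> standard_monomial \<Delta> d (Poly_Mapping.single i 1 + b)" if "i \<in> ?K" for i
      using assms(1) that unfolding simplicial_complex_def standard_monomial_def keys_single_one_add
      by (auto simp: insert_absorb)
    then show ?thesis
      using cycle_weight_not_standard[OF assms(2)] by simp
  qed
  then show ?thesis
    using sum.Int_Diff[of "{1..n}" ?w ?K] sum_cycle_weight_new_vars[OF assms(2,3)] by simp
qed

lemma pairing_var_sum_mult:
  fixes w :: "(nat \<Rightarrow>\<^sub>0 nat) \<Rightarrow> 'k::comm_ring_1"
  assumes "\<And>b. (\<Sum>i\<in>I. w (Poly_Mapping.single i 1 + b)) = 0"
  shows "pairing w ((\<Sum>i\<in>I. var i) * g) = 0"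
proof -
  have "(\<Sum>i\<in>I. var i) * g =
      (\<Sum>b\<in>Poly_Mapping.keys g. \<Sum>i\<in>I.
         Poly_Mapping.single (Poly_Mapping.single i 1 + b) (Poly_Mapping.lookup g b))"
    by (subst (1) poly_mapping_sum_single[symmetric])
      (simp add: sum_distrib_left sum_distrib_right var_def mult_single)
  then show ?thesis
    by (simp add: pairing_sum sum_distrib_left[symmetric] assms)
qed

lemma sum_Icc_1_eq_choose_two: "\<Sum>{1..k} = (k + 1) choose 2" for k :: nat
  by (induction k) (simp_all add: numeral_2_eq_2 One_nat_def)

lemma exists_distinct_exponents_monomial:
  assumes "finite \<sigma>" "card \<sigma> = d + 1"
  obtains a where "Poly_Mapping.keys a = \<sigma>" "distinct_exponents d a" "mdeg a = (d + 2) choose 2"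
proof -
  obtain h where h: "bij_betw h \<sigma> {1..d + 1}"
    using finite_same_card_bij[OF assms(1), of "{1..d + 1}"] assms(2) by auto
  define a where "a = Abs_poly_mapping (\<lambda>x. if x \<in> \<sigma> then h x else 0)"
  have lookup: "Poly_Mapping.lookup a = (\<lambda>x. if x \<in> \<sigma> then h x else 0)"
    unfolding a_def using assms(1) by (intro lookup_Abs_poly_mapping) (simp add: finite_subset[of _ \<sigma>])
  have range: "h x \<in> {1..d + 1}" if "x \<in> \<sigma>" for x
    using h that by (meson bij_betwE)
  have keys: "Poly_Mapping.keys a = \<sigma>"
  proof (intro set_eqI)
    show "x \<in> Poly_Mapping.keys a \<longleftrightarrow> x \<in> \<sigma>" for x
      using range[of x] by (auto simp: in_keys_iff lookup)
  qed
  have "distinct_exponents d a"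
    using bij_betw_imp_inj_on[OF h] range unfolding distinct_exponents_def keys lookup
    by (auto simp: inj_on_def)
  moreover have "mdeg a = (d + 2) choose 2"
  proof -
    have "mdeg a = sum h \<sigma>"
      unfolding mdeg_def keys lookup by simp
    also have "\<dots> = \<Sum>{1..d + 1}"
      using sum.reindex_bij_betw[OF h, of id] by simp
    also have "\<dots> = (d + 2) choose 2"
      using sum_Icc_1_eq_choose_two[of "d + 1"] by (simp add: One_nat_def)
    finally show ?thesis .
  qed
  ultimately show thesis
    using keys that by blast
qed

lemma reduced_homology_nonzero_obtains_cycle:
  assumes "reduced_homology_nonzero TYPE('k::field) n \<Delta> k"
  obtains z :: "nat set \<Rightarrow> 'k::field" and \<sigma>
  where "is_chain \<Delta> k z" "\<forall>\<tau>. boundary n \<Delta> z \<tau> = 0" "z \<sigma> \<noteq> 0"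
proof -
  obtain z :: "nat set \<Rightarrow> 'k" where z: "is_chain \<Delta> k z" "\<forall>\<tau>. boundary n \<Delta> z \<tau> = 0"
    and not_boundary: "\<not> (\<exists>b. is_chain \<Delta> (k + 1) b \<and> (\<forall>\<tau>. z \<tau> = boundary n \<Delta> b \<tau>))"
    using assms unfolding reduced_homology_nonzero_def by blast
  have "is_chain \<Delta> (k + 1) (\<lambda>_. 0 :: 'k)" "\<forall>\<tau>. boundary n \<Delta> (\<lambda>_. 0 :: 'k) \<tau> = 0"
    unfolding is_chain_def boundary_def by (auto intro: sum.neutral)
  with not_boundary obtain \<sigma> where "z \<sigma> \<noteq> 0"
    by fastforce
  with z that show thesis
    by blast
qed

theorem proposition5p9:
  fixes n d :: nat and \<Delta> :: "nat set set"
  assumes "simplicial_complex n \<Delta>"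
    and "complex_dim \<Delta> d"
    and "reduced_homology_nonzero TYPE('k::field) n \<Delta> d"
  defines "L \<equiv> (\<Sum>i\<in>{1..n}. var i) :: 'k mpoly"
    and "J \<equiv> ideal_gen n (SR_ideal n \<Delta> \<union> {var i ^ (d + 2) | i. i \<in> {1..n}})"
    and "m \<equiv> (d + 2) choose 2"
  shows "\<exists>f\<in>polyring n. homogeneous m f \<and>
           (\<forall>g\<in>polyring n. homogeneous (m - 1) g \<longrightarrow> f - L * g \<notin> J)"
proof -
  obtain z :: "nat set \<Rightarrow> 'k" and \<sigma>
    where chain: "is_chain \<Delta> d z" and cycle: "\<forall>\<tau>. boundary n \<Delta> z \<tau> = 0" and "z \<sigma> \<noteq> 0"
    using reduced_homology_nonzero_obtains_cycle[OF assms(3)] .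
  then have "\<sigma> \<in> \<Delta>" "card \<sigma> = d + 1"
    unfolding is_chain_def by auto
  then have "\<sigma> \<subseteq> {1..n}" "finite \<sigma>"
    using assms(1) finite_subset unfolding simplicial_complex_def by auto
  then obtain a where a: "Poly_Mapping.keys a = \<sigma>" "distinct_exponents d a" "mdeg a = m"
    using exists_distinct_exponents_monomial \<open>card \<sigma> = d + 1\<close> unfolding m_def by metis
  let ?w = "cycle_weight z d"
  have "pairing ?w (Poly_Mapping.single a 1 - L * g) \<noteq> 0" for g
  proof -
    have "pairing ?w (L * g) = 0"
      unfolding L_def using sum_cycle_weight_single_one_add[OF assms(1) chain cycle]
      by (rule pairing_var_sum_mult)
    then show ?thesis
      using a \<open>z \<sigma> \<noteq> 0\<close> by (simp add: pairing_diff cycle_weight_def exponent_sign_def)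
  qed
  moreover have "pairing ?w h = 0" if "h \<in> J" for h
    using that keys_ideal_not_standard[OF assms(1)] cycle_weight_not_standard[OF chain]
    unfolding J_def by (intro pairing_eq_0) blast
  moreover have "Poly_Mapping.single a 1 \<in> polyring n" "homogeneous m (Poly_Mapping.single a (1::'k))"
    using a \<open>\<sigma> \<subseteq> {1..n}\<close> unfolding polyring_def homogeneous_def by auto
  ultimately show ?thesis
    by blast
qed

end
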